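(* Let $C$ and $D$ be two disjoint sets of first-order formulas such that $|D|\le |C|$ and, for every $\phi\in C$, $(C\cup D)\setminus\{\phi\}\nvDash \phi$. Then $C\cup D$ is equivalent to an independent set of formulas.
   Context: Classical first-order logic; the Axiom of Choice is assumed. Two sets of formulas are equivalent if every formula of each set is a consequence of the other set (equivalently, they have the same models). A set of formulas $T$ is independent if for every $\phi\in T$, $T\setminus\{\phi\}\nvDash\phi$ (equivalently, $(T\setminus\{\phi\})\cup\{\neg\phi\}$ has a model). *)

theory Defs
  imports Main
begin

text \<open>Signature: function symbols of type 'f, predicate symbols of type 'p
  (arities are not fixed; a symbol is interpreted on argument lists).
  Variables are natural numbers.\<close>

datatype 'f trm = Var nat | Fn 'f "'f trm list"

datatype ('f, 'p) fm =
    Bot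
  | Atom 'p "'f trm list"
  | Eq "'f trm" "'f trm"
  | Imp "('f, 'p) fm" "('f, 'p) fm"
  | All nat "('f, 'p) fm"

record ('u, 'f, 'p) struct =
  dom :: "'u set"
  fint :: "'f \<Rightarrow> 'u list \<Rightarrow> 'u"
  pint :: "'p \<Rightarrow> 'u list \<Rightarrow> bool"

definition is_struct :: "('u, 'f, 'p) struct \<Rightarrow> bool" where
  "is_struct M \<longleftrightarrow> dom M \<noteq> {} \<and>
     (\<forall>f xs. set xs \<subseteq> dom M \<longrightarrow> fint M f xs \<in> dom M)"

primrec eval_trm :: "('u, 'f, 'p) struct \<Rightarrow> (nat \<Rightarrow> 'u) \<Rightarrow> 'f trm \<Rightarrow> 'u" where
  "eval_trm M s (Var n) = s n"
| "eval_trm M s (Fn f ts) = fint M f (map (eval_trm M s) ts)"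

primrec sat :: "('u, 'f, 'p) struct \<Rightarrow> (nat \<Rightarrow> 'u) \<Rightarrow> ('f, 'p) fm \<Rightarrow> bool" where
  "sat M s Bot = False"
| "sat M s (Atom P ts) = pint M P (map (eval_trm M s) ts)"
| "sat M s (Eq t u) = (eval_trm M s t = eval_trm M s u)"
| "sat M s (Imp \<phi> \<psi>) = (sat M s \<phi> \<longrightarrow> sat M s \<psi>)"
| "sat M s (All x \<phi>) = (\<forall>a\<in>dom M. sat M (s(x := a)) \<phi>)"

text \<open>Models are taken with universe a subset of the type nat + f + p,
  whose cardinality is max(aleph_0, |language|); by the downward
  Loewenheim--Skolem theorem (AC assumed) this gives the usual consequence relation.\<close>

type_synonym ('f, 'p) univ = "nat + 'f + 'p"

definition entails :: "('f, 'p) fm set \<Rightarrow> ('f, 'p) fm \<Rightarrow> bool" (infix "\<Turnstile>" 50) where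
  "T \<Turnstile> \<phi> \<longleftrightarrow>
     (\<forall>(M :: (('f, 'p) univ, 'f, 'p) struct) s.
        is_struct M \<longrightarrow> (\<forall>n. s n \<in> dom M) \<longrightarrow> (\<forall>\<psi>\<in>T. sat M s \<psi>) \<longrightarrow> sat M s \<phi>)"

definition equivalent :: "('f, 'p) fm set \<Rightarrow> ('f, 'p) fm set \<Rightarrow> bool" where
  "equivalent A B \<longleftrightarrow> (\<forall>\<phi>\<in>A. B \<Turnstile> \<phi>) \<and> (\<forall>\<phi>\<in>B. A \<Turnstile> \<phi>)"

definition independent :: "('f, 'p) fm set \<Rightarrow> bool" where
  "independent T \<longleftrightarrow> (\<forall>\<phi>\<in>T. \<not> (T - {\<phi>} \<Turnstile> \<phi>))"

end

theory Submission
  imports Defs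
begin

text \<open>Pair each formula of \<open>D\<close> with its image under an injection \<open>g : D \<rightarrow> C\<close>, replacing
  \<open>g d\<close> by the conjunction \<open>g d \<and> d\<close>.
  It is independent because each of its members \<open>x\<close> implies a formula \<open>c \<in> C\<close> that
  occurs in no other member: if \<open>x\<close> followed from the others, then \<open>c\<close> would follow
  from \<open>(C \<union> D) - {c}\<close>.\<close>

definition Conj :: "('f, 'p) fm \<Rightarrow> ('f, 'p) fm \<Rightarrow> ('f, 'p) fm" where
  "Conj a b = Imp (Imp a (Imp b Bot)) Bot"

lemma sat_Conj [simp]: "sat M s (Conj a b) \<longleftrightarrow> sat M s a \<and> sat M s b"
  by (auto simp: Conj_def)

lemma entails_member: "\<phi> \<in> A \<Longrightarrow> A \<Turnstile> \<phi>"
  unfolding entails_def by blast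

lemma entails_trans: "\<forall>\<psi>\<in>B. A \<Turnstile> \<psi> \<Longrightarrow> B \<Turnstile> \<phi> \<Longrightarrow> A \<Turnstile> \<phi>"
  unfolding entails_def by blast

lemma entails_Conj_iff: "A \<Turnstile> Conj a b \<longleftrightarrow> A \<Turnstile> a \<and> A \<Turnstile> b"
  unfolding entails_def by auto

lemma entails_Conj_member: "a \<in> A \<Longrightarrow> b \<in> A \<Longrightarrow> A \<Turnstile> Conj a b"
  by (simp add: entails_Conj_iff entails_member)

lemma independentI:
  assumes "\<And>x. x \<in> T \<Longrightarrow>
    \<exists>c. {x} \<Turnstile> c \<and> (\<forall>y\<in>T - {x}. S - {c} \<Turnstile> y) \<and> \<not> (S - {c} \<Turnstile> c)"
  shows "independent T"
  unfolding independent_def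
proof (intro ballI notI)
  fix x assume "x \<in> T" and x_from_rest: "T - {x} \<Turnstile> x"
  then obtain c where "{x} \<Turnstile> c" and rest: "\<forall>y\<in>T - {x}. S - {c} \<Turnstile> y"
    and "\<not> (S - {c} \<Turnstile> c)"
    using assms by blast
  moreover have "S - {c} \<Turnstile> x" using entails_trans[OF rest x_from_rest] .
  ultimately show False using entails_trans[of "{x}" "S - {c}" c] by blast
qed

definition conj_replace :: "(('f, 'p) fm \<Rightarrow> ('f, 'p) fm) \<Rightarrow> ('f, 'p) fm set \<Rightarrow> ('f, 'p) fm set
    \<Rightarrow> ('f, 'p) fm set" where
  "conj_replace g C D = (C - g ` D) \<union> (\<lambda>d. Conj (g d) d) ` D"

lemma equivalent_conj_replace:
  assumes "g ` D \<subseteq> C"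
  shows "equivalent (C \<union> D) (conj_replace g C D)"
  unfolding equivalent_def
proof (intro conjI ballI)
  fix \<phi> assume "\<phi> \<in> C \<union> D"
  then consider "\<phi> \<in> C - g ` D" | d where "d \<in> D" "\<phi> = g d \<or> \<phi> = d" by blast
  then show "conj_replace g C D \<Turnstile> \<phi>"
  proof cases
    case 1 then show ?thesis by (simp add: conj_replace_def entails_member)
  next
    case 2
    then have "conj_replace g C D \<Turnstile> Conj (g d) d"
      by (simp add: conj_replace_def entails_member)
    with 2 show ?thesis by (auto simp: entails_Conj_iff)
  qed
next
  fix \<phi> assume "\<phi> \<in> conj_replace g C D"
  with assms show "C \<union> D \<Turnstile> \<phi>"
    by (auto simp: conj_replace_def entails_member intro: entails_Conj_member)
qed

lemma independent_conj_replace: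
  assumes disjoint: "C \<inter> D = {}" and "inj_on g D" and "g ` D \<subseteq> C"
    and C_independent: "\<forall>c\<in>C. \<not> ((C \<union> D) - {c} \<Turnstile> c)"
  shows "independent (conj_replace g C D)"
proof (rule independentI)
  fix x assume x: "x \<in> conj_replace g C D"
  obtain c where "c \<in> C" and "{x} \<Turnstile> c"
    and c_unused: "\<And>y. y \<in> conj_replace g C D - {x} \<Longrightarrow> y \<in> C - g ` D \<Longrightarrow> y \<noteq> c"
    and c_unused_Conj: "\<And>e. e \<in> D \<Longrightarrow> Conj (g e) e \<noteq> x \<Longrightarrow> g e \<noteq> c"
  proof (cases "x \<in> C - g ` D")
    case True
    then show ?thesis by (intro that[of x]) (auto simp: entails_member)
  next
    case False
    then obtain d where d: "d \<in> D" "x = Conj (g d) d"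
      using x by (auto simp: conj_replace_def)
    show ?thesis
    proof (rule that[of "g d"])
      show "g d \<in> C" using d \<open>g ` D \<subseteq> C\<close> by blast
      show "{x} \<Turnstile> g d" using d by (simp add: entails_def)
      show "\<And>e. e \<in> D \<Longrightarrow> Conj (g e) e \<noteq> x \<Longrightarrow> g e \<noteq> g d"
        using d \<open>inj_on g D\<close> by (auto dest: inj_onD)
    qed (use d in blast)
  qed
  have "(C \<union> D) - {c} \<Turnstile> y" if y: "y \<in> conj_replace g C D - {x}" for y
  proof -
    from y consider "y \<in> C - g ` D" | e where "e \<in> D" "y = Conj (g e) e"
      unfolding conj_replace_def by blast
    then show ?thesis
    proof cases
      case 1
      with y c_unused show ?thesis by (auto intro: entails_member)
    next
      case 2
      have "g e \<noteq> c" using 2 y c_unused_Conj by blast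
      moreover have "e \<noteq> c" using 2 \<open>c \<in> C\<close> disjoint by blast
      ultimately show ?thesis
        using 2 \<open>g ` D \<subseteq> C\<close> by (auto intro!: entails_Conj_member)
    qed
  qed
  with \<open>c \<in> C\<close> \<open>{x} \<Turnstile> c\<close> C_independent
  show "\<exists>c. {x} \<Turnstile> c \<and> (\<forall>y\<in>conj_replace g C D - {x}. (C \<union> D) - {c} \<Turnstile> y)
            \<and> \<not> ((C \<union> D) - {c} \<Turnstile> c)"
    by blast
qed

theorem lemma2:
  fixes C D :: "('f, 'p) fm set"
  assumes "C \<inter> D = {}"
    and "\<exists>g. inj_on g D \<and> g ` D \<subseteq> C"
    and "\<forall>\<phi>\<in>C. \<not> ((C \<union> D) - {\<phi>} \<Turnstile> \<phi>)"
  shows "\<exists>T :: ('f, 'p) fm set. equivalent (C \<union> D) T \<and> independent T"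
proof -
  obtain g where "inj_on g D" and "g ` D \<subseteq> C" using assms(2) by blast
  then have "equivalent (C \<union> D) (conj_replace g C D)" and "independent (conj_replace g C D)"
    using assms(1,3) by (simp_all add: equivalent_conj_replace independent_conj_replace)
  then show ?thesis by blast
qed

end
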